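(* Let $\ell\ge 1$ and $w\ge 0$ be integers, and let $A=\langle A_1,\dots,A_\ell\rangle$ and $B=\langle B_1,\dots,B_\ell\rangle$ be real sequences. Let $i,j\in\{1,\dots,\ell\}$ with $i-w\le j\le i+w$, so that $(i,j)$ is an alignment permitted by the window $w$. If $B_j>\mathbb{U}^{\Omega}_j$, then either $A_i<\mathbb{L}^B_i\le B_j\le \mathbb{U}^B_i$ or $\mathbb{L}^B_i\le A_i\le B_j\le \mathbb{U}^B_i$.
   Context: For a real sequence $S=\langle S_1,\dots,S_\ell\rangle$ and window $w$, the upper and lower envelopes are the sequences $\mathbb{U}^S_i=\max_{\max(1,i-w)\le j\le \min(\ell,i+w)} S_j$ and $\mathbb{L}^S_i=\min_{\max(1,i-w)\le j\le \min(\ell,i+w)} S_j$ for $1\le i\le\ell$. The projection $\Omega=\Omega_w(A,B)$ of $A$ onto $B$ is the sequence with $\Omega_i=\mathbb{U}^B_i$ if $A_i>\mathbb{U}^B_i$, $\Omega_i=\mathbb{L}^B_i$ if $A_i<\mathbb{L}^B_i$, and $\Omega_i=A_i$ otherwise. $\mathbb{U}^{\Omega}$ and $\mathbb{L}^{\Omega}$ denote the upper and lower envelopes (with the same window $w$) of $\Omega$. *)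

theory Defs
  imports Complex_Main
begin

text \<open>Sequences of length l are functions nat \<Rightarrow> real, meaningful on indices 1..l.
  Window w is a natural number.\<close>

definition win :: "nat \<Rightarrow> nat \<Rightarrow> nat \<Rightarrow> nat set" where
  "win l w i = {j. max 1 (int i - int w) \<le> int j \<and> j \<le> min l (i + w)}"

definition upper_env :: "nat \<Rightarrow> nat \<Rightarrow> (nat \<Rightarrow> real) \<Rightarrow> nat \<Rightarrow> real" where
  "upper_env l w S i = Max (S ` win l w i)"

definition lower_env :: "nat \<Rightarrow> nat \<Rightarrow> (nat \<Rightarrow> real) \<Rightarrow> nat \<Rightarrow> real" where
  "lower_env l w S i = Min (S ` win l w i)"

definition projection :: "nat \<Rightarrow> nat \<Rightarrow> (nat \<Rightarrow> real) \<Rightarrow> (nat \<Rightarrow> real) \<Rightarrow> nat \<Rightarrow> real" where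
  "projection l w A B i =
     (if A i > upper_env l w B i then upper_env l w B i
      else if A i < lower_env l w B i then lower_env l w B i
      else A i)"

end

theory Submission
  imports Defs
begin

text \<open>Since the window is symmetric, \<open>i\<close> lies in the window of \<open>j\<close>, so
  \<open>\<Omega>\<^sub>i \<le> \<UU>\<^sup>\<Omega>\<^sub>j < B\<^sub>j\<close>; and \<open>j\<close> lies in the window of \<open>i\<close>, so
  \<open>\<LL>\<^sup>B\<^sub>i \<le> B\<^sub>j \<le> \<UU>\<^sup>B\<^sub>i\<close>. A projected value below a bound not exceeding \<open>\<UU>\<^sup>B\<^sub>i\<close>
  forces the original value \<open>A\<^sub>i\<close> below that bound, hence \<open>A\<^sub>i < B\<^sub>j\<close>, and the two
  alternatives differ only in whether \<open>A\<^sub>i\<close> lies below \<open>\<LL>\<^sup>B\<^sub>i\<close>.\<close>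

lemma finite_win: "finite (win l w i)"
  by (rule finite_subset[of _ "{..l}"]) (auto simp: win_def)

lemma mem_win_iff:
  "j \<in> win l w i \<longleftrightarrow> 1 \<le> j \<and> j \<le> l \<and> int i - int w \<le> int j \<and> j \<le> i + w"
  by (auto simp: win_def)

lemma upper_env_ge: "j \<in> win l w i \<Longrightarrow> S j \<le> upper_env l w S i"
  unfolding upper_env_def using finite_win by (intro Max_ge) auto

lemma lower_env_le: "j \<in> win l w i \<Longrightarrow> lower_env l w S i \<le> S j"
  unfolding lower_env_def using finite_win by (intro Min_le) auto

lemma less_of_projection_less:
  assumes "projection l w A B i < x" and "x \<le> upper_env l w B i"
  shows "A i < x"
  using assms unfolding projection_def by (auto split: if_splits)

theorem mainTheorem1:
  fixes l w i j :: nat and A B :: "nat \<Rightarrow> real"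
  assumes "l \<ge> 1"
    and "1 \<le> i" "i \<le> l" "1 \<le> j" "j \<le> l"
    and "int i - int w \<le> int j" "j \<le> i + w"
    and "B j > upper_env l w (projection l w A B) j"
  shows "(A i < lower_env l w B i \<and> lower_env l w B i \<le> B j \<and> B j \<le> upper_env l w B i)
       \<or> (lower_env l w B i \<le> A i \<and> A i \<le> B j \<and> B j \<le> upper_env l w B i)"
proof -
  have j_win_i: "j \<in> win l w i" and i_win_j: "i \<in> win l w j"
    using assms(2-7) by (auto simp: mem_win_iff)
  have lower: "lower_env l w B i \<le> B j" and upper: "B j \<le> upper_env l w B i"
    using j_win_i by (rule lower_env_le, rule upper_env_ge)
  have "projection l w A B i < B j"
    using upper_env_ge[OF i_win_j, of "projection l w A B"] assms(8) by linarith
  then have "A i < B j"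
    using upper by (rule less_of_projection_less)
  then show ?thesis
    using lower upper by linarith
qed

end
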